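(* Let $m\ge 1$ and let $\alpha_0,\dots,\alpha_{m-1},\beta_0,\dots,\beta_{m-1}$ be real numbers. Consider the element \[ P=\sum_{k=0}^{m-1}\alpha_kx^k+\sum_{k=0}^{m-1}\beta_k\,yx^k \] both in $\mathbb{C}[\mathbb{Z}/m\mathbb{Z}\times\mathbb{Z}/2\mathbb{Z}]$, where $\mathbb{Z}/m\mathbb{Z}\times\mathbb{Z}/2\mathbb{Z}=\langle x,y\mid x^m,y^2,[x,y]\rangle$, and in $\mathbb{C}[D_m]$, where $D_m=\langle x,y\mid x^m,y^2,yxyx\rangle$ (same coefficients, same words). Assume $P$ is reciprocal in $\mathbb{C}[\mathbb{Z}/m\mathbb{Z}\times\mathbb{Z}/2\mathbb{Z}]$ (then it is also reciprocal in $\mathbb{C}[D_m]$). Let $k=\sum_k(|\alpha_k|+|\beta_k|)$ and $|\lambda|<1/k$. Then \[ m_{\mathbb{Z}/m\mathbb{Z}\times\mathbb{Z}/2\mathbb{Z}}(P,\lambda)=m_{D_m}(P,\lambda). \]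
   Context: For a group $\Gamma$ and $Q=\sum_{g\in\Gamma}c_g g\in\mathbb{C}\Gamma$ (finite sum), the reciprocal is $Q^*=\sum_g\overline{c_g}\,g^{-1}$, and $Q$ is reciprocal if $Q=Q^*$. For reciprocal $P\in\mathbb{C}\Gamma$ with $l_1$-norm $k=\sum_g|c_g|$ and $|\lambda|<1/k$, define $m_\Gamma(P,\lambda)=-\sum_{n\ge1}a_n\lambda^n/n$, where $a_n$ is the coefficient of the identity element of $\Gamma$ in $P^n$. *)

theory Defs
  imports "HOL-Analysis.Analysis" "HOL-Algebra.Group"
begin

text \<open>An element of the complex group algebra C[Gamma] is a finitely supported function
  Q : carrier G -> complex (the coefficient function, Q g = c_g).\<close>

definition ga_supp :: "('g, 'b) monoid_scheme \<Rightarrow> ('g \<Rightarrow> complex) \<Rightarrow> 'g set" where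
  "ga_supp G Q = {g \<in> carrier G. Q g \<noteq> 0}"

definition ga_elem :: "('g, 'b) monoid_scheme \<Rightarrow> ('g \<Rightarrow> complex) \<Rightarrow> bool" where
  "ga_elem G Q \<longleftrightarrow> finite (ga_supp G Q) \<and> (\<forall>g. g \<notin> carrier G \<longrightarrow> Q g = 0)"

definition ga_mult :: "('g, 'b) monoid_scheme \<Rightarrow> ('g \<Rightarrow> complex) \<Rightarrow> ('g \<Rightarrow> complex) \<Rightarrow> 'g \<Rightarrow> complex" where
  "ga_mult G P Q = (\<lambda>g. if g \<in> carrier G then
      (\<Sum>h\<in>ga_supp G P. P h * Q (inv\<^bsub>G\<^esub> h \<otimes>\<^bsub>G\<^esub> g)) else 0)"

definition ga_one :: "('g, 'b) monoid_scheme \<Rightarrow> 'g \<Rightarrow> complex" where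
  "ga_one G = (\<lambda>g. if g = \<one>\<^bsub>G\<^esub> then 1 else 0)"

fun ga_pow :: "('g, 'b) monoid_scheme \<Rightarrow> ('g \<Rightarrow> complex) \<Rightarrow> nat \<Rightarrow> 'g \<Rightarrow> complex" where
  "ga_pow G P 0 = ga_one G"
| "ga_pow G P (Suc n) = ga_mult G (ga_pow G P n) P"

definition ga_star :: "('g, 'b) monoid_scheme \<Rightarrow> ('g \<Rightarrow> complex) \<Rightarrow> 'g \<Rightarrow> complex" where
  "ga_star G Q = (\<lambda>g. if g \<in> carrier G then cnj (Q (inv\<^bsub>G\<^esub> g)) else 0)"

definition ga_reciprocal :: "('g, 'b) monoid_scheme \<Rightarrow> ('g \<Rightarrow> complex) \<Rightarrow> bool" where
  "ga_reciprocal G Q \<longleftrightarrow> Q = ga_star G Q"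

definition ga_l1norm :: "('g, 'b) monoid_scheme \<Rightarrow> ('g \<Rightarrow> complex) \<Rightarrow> real" where
  "ga_l1norm G Q = (\<Sum>g\<in>ga_supp G Q. cmod (Q g))"

definition ga_trace_coeff :: "('g, 'b) monoid_scheme \<Rightarrow> ('g \<Rightarrow> complex) \<Rightarrow> nat \<Rightarrow> complex" where
  "ga_trace_coeff G P n = ga_pow G P n \<one>\<^bsub>G\<^esub>"

definition mahler_m :: "('g, 'b) monoid_scheme \<Rightarrow> ('g \<Rightarrow> complex) \<Rightarrow> complex \<Rightarrow> complex" where
  "mahler_m G P z = - (\<Sum>n. ga_trace_coeff G P (Suc n) * z ^ Suc n / of_nat (Suc n))"

text \<open>Elements are pairs (a, b) with a in {0..<m}, b :: bool, standing for the word
  y^b x^a.  Group laws are the normal forms from the presentations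
  Z/m x Z/2 = <x,y | x^m, y^2, [x,y]> and D_m = <x,y | x^m, y^2, yxyx>.\<close>

definition cyc_times_C2 :: "nat \<Rightarrow> (nat \<times> bool) monoid" where
  "cyc_times_C2 m = \<lparr> carrier = {0..<m} \<times> UNIV,
     mult = (\<lambda>(a, b) (c, d). ((a + c) mod m, b \<noteq> d)),
     one = (0, False) \<rparr>"

text \<open>In D_m: (y^b x^a)(y^d x^c) = y^(b+d) x^(s a + c), s = -1 if d = 1 else 1,
  since y x^a y = x^(-a).\<close>
definition dihedral :: "nat \<Rightarrow> (nat \<times> bool) monoid" where
  "dihedral m = \<lparr> carrier = {0..<m} \<times> UNIV,
     mult = (\<lambda>(a, b) (c, d). ((if d then (m - a) + c else a + c) mod m, b \<noteq> d)),
     one = (0, False) \<rparr>"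

text \<open>The element P = sum_k alpha_k x^k + sum_k beta_k y x^k, with x^k = (k, False)
  and y x^k = (k, True).\<close>
definition P_elem :: "nat \<Rightarrow> (nat \<Rightarrow> real) \<Rightarrow> (nat \<Rightarrow> real) \<Rightarrow> nat \<times> bool \<Rightarrow> complex" where
  "P_elem m \<alpha> \<beta> = (\<lambda>(a, b). if a < m then complex_of_real (if b then \<beta> a else \<alpha> a) else 0)"

end

(*
  Since Z/m x Z/2 is abelian, its inversion-invariant group-algebra elements form a subalgebra,
  and a reciprocal P with real coefficients is one of them. For inversion-invariant Q the two
  convolutions (Q P)(g) = sum_h Q h P(h^-1 g) coincide: the dihedral h^-1 g is the abelian one
  taken at the image of h under the involution that inverts the x-part of h whenever h and g lie
  in different cosets of <x>, and this involution fixes Q. So P^n is the same in both group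
  algebras, and the two series defining m(P, lambda) agree term by term.
*)

theory Submission
  imports Defs
begin

definition inv_invariant :: "('g, 'b) monoid_scheme \<Rightarrow> ('g \<Rightarrow> complex) \<Rightarrow> bool" where
  "inv_invariant G Q \<longleftrightarrow> (\<forall>g\<in>carrier G. Q (inv\<^bsub>G\<^esub> g) = Q g)"

lemma inv_invariant_if_reciprocal_real:
  assumes "ga_reciprocal G Q" and "\<And>g. Q g \<in> \<real>"
  shows "inv_invariant G Q"
  unfolding inv_invariant_def
proof
  fix g assume "g \<in> carrier G"
  then have "Q g = cnj (Q (inv\<^bsub>G\<^esub> g))"
    using assms(1) by (metis ga_reciprocal_def ga_star_def)
  then show "Q (inv\<^bsub>G\<^esub> g) = Q g"
    using assms(2) by (simp add: Reals_cnj_iff)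
qed

lemma ga_mult_eq_sum_carrier:
  assumes "finite (carrier G)" and "g \<in> carrier G"
  shows "ga_mult G Q P g = (\<Sum>h\<in>carrier G. Q h * P (inv\<^bsub>G\<^esub> h \<otimes>\<^bsub>G\<^esub> g))"
  using assms unfolding ga_mult_def by (auto intro!: sum.mono_neutral_left simp: ga_supp_def)

lemma (in group) inv_invariant_ga_one: "inv_invariant G (ga_one G)"
  by (simp add: inv_invariant_def ga_one_def)

lemma (in comm_group) inv_invariant_ga_mult:
  assumes "finite (carrier G)" and "inv_invariant G Q" and "inv_invariant G P"
  shows "inv_invariant G (ga_mult G Q P)"
  unfolding inv_invariant_def
proof
  fix g assume g: "g \<in> carrier G"
  have inv_bij: "bij_betw (m_inv G) (carrier G) (carrier G)"
    by (rule bij_betw_byWitness[where f' = "m_inv G"]) auto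
  have "ga_mult G Q P (inv g) = (\<Sum>h\<in>carrier G. Q h * P (inv h \<otimes> inv g))"
    using assms(1) g by (simp add: ga_mult_eq_sum_carrier)
  also have "\<dots> = (\<Sum>h\<in>carrier G. Q (inv h) * P (inv (inv h) \<otimes> inv g))"
    by (rule sum.reindex_bij_betw[OF inv_bij, symmetric])
  also have "\<dots> = (\<Sum>h\<in>carrier G. Q h * P (inv h \<otimes> g))"
  proof (rule sum.cong)
    fix h assume h: "h \<in> carrier G"
    then have "inv (inv h) \<otimes> inv g = inv (inv h \<otimes> g)"
      using g by (simp add: inv_mult_group m_comm)
    then show "Q (inv h) * P (inv (inv h) \<otimes> inv g) = Q h * P (inv h \<otimes> g)"
      using assms(2,3) g h by (simp add: inv_invariant_def)
  qed simp
  also have "\<dots> = ga_mult G Q P g"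
    using assms(1) g by (simp add: ga_mult_eq_sum_carrier)
  finally show "ga_mult G Q P (inv g) = ga_mult G Q P g" .
qed

lemma (in comm_group) inv_invariant_ga_pow:
  assumes "finite (carrier G)" and "inv_invariant G P"
  shows "inv_invariant G (ga_pow G P n)"
  by (induction n) (simp_all add: inv_invariant_ga_one inv_invariant_ga_mult assms)

(* The residue of -a modulo m for a \<le> m; truncated subtraction makes it 0 for a > m. *)
definition mod_neg :: "nat \<Rightarrow> nat \<Rightarrow> nat" where
  "mod_neg m a = (m - a) mod m"

lemma mod_neg_less: "0 < m \<Longrightarrow> mod_neg m a < m"
  by (simp add: mod_neg_def)

lemma mod_neg_mod_neg: "a < m \<Longrightarrow> mod_neg m (mod_neg m a) = a"
  by (cases "a = 0") (simp_all add: mod_neg_def)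

lemma add_mod_neg_eq_0: "a \<le> m \<Longrightarrow> (a + mod_neg m a) mod m = 0"
  by (simp add: mod_neg_def mod_add_right_eq)

lemma int_mod_neg: "a \<le> m \<Longrightarrow> int (mod_neg m a) = - int a mod int m"
  by (cases "a = m")
    (simp_all add: mod_neg_def of_nat_mod mod_diff_left_eq[where a = "int m", symmetric])

lemma mod_neg_add_mod:
  assumes "a < m" and "c < m"
  shows "mod_neg m ((a + c) mod m) = (mod_neg m a + mod_neg m c) mod m"
proof -
  have "int (mod_neg m ((a + c) mod m)) = int ((mod_neg m a + mod_neg m c) mod m)"
    using assms by (simp add: int_mod_neg of_nat_mod mod_simps)
  then show ?thesis by (simp only: of_nat_eq_iff)
qed

lemma carrier_cyc_times_C2: "carrier (cyc_times_C2 m) = {..<m} \<times> UNIV"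
  by (auto simp: cyc_times_C2_def)

lemma carrier_dihedral: "carrier (dihedral m) = {..<m} \<times> UNIV"
  by (auto simp: dihedral_def)

lemma one_cyc_times_C2: "\<one>\<^bsub>cyc_times_C2 m\<^esub> = (0, False)"
  by (simp add: cyc_times_C2_def)

lemma one_dihedral: "\<one>\<^bsub>dihedral m\<^esub> = (0, False)"
  by (simp add: dihedral_def)

lemma cyc_times_C2_mult: "(a, b) \<otimes>\<^bsub>cyc_times_C2 m\<^esub> (c, d) = ((a + c) mod m, b \<noteq> d)"
  by (simp add: cyc_times_C2_def)

lemma dihedral_mult:
  assumes "a < m"
  shows "(a, b) \<otimes>\<^bsub>dihedral m\<^esub> (c, d) = (((if d then mod_neg m a else a) + c) mod m, b \<noteq> d)"
  using assms by (simp add: dihedral_def mod_neg_def mod_add_left_eq)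

lemma comm_group_cyc_times_C2:
  assumes "0 < m"
  shows "comm_group (cyc_times_C2 m)"
proof (rule comm_groupI)
  fix x assume "x \<in> carrier (cyc_times_C2 m)"
  then obtain a b where x: "x = (a, b)" "a < m"
    by (auto simp: carrier_cyc_times_C2)
  show "\<exists>y\<in>carrier (cyc_times_C2 m). y \<otimes>\<^bsub>cyc_times_C2 m\<^esub> x = \<one>\<^bsub>cyc_times_C2 m\<^esub>"
    using x assms by (intro bexI[of _ "(mod_neg m a, b)"])
      (auto simp: mod_neg_less add_mod_neg_eq_0 add.commute cyc_times_C2_def)
qed (use assms in \<open>auto simp: cyc_times_C2_def mod_simps ac_simps\<close>)

lemma group_dihedral:
  assumes "0 < m"
  shows "group (dihedral m)"
proof (rule groupI)
  fix x y z
  assume "x \<in> carrier (dihedral m)" "y \<in> carrier (dihedral m)" "z \<in> carrier (dihedral m)"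
  then obtain a b c d e f where "x = (a, b)" "y = (c, d)" "z = (e, f)" "a < m" "c < m" "e < m"
    by (auto simp: carrier_dihedral)
  then show "x \<otimes>\<^bsub>dihedral m\<^esub> y \<otimes>\<^bsub>dihedral m\<^esub> z = x \<otimes>\<^bsub>dihedral m\<^esub> (y \<otimes>\<^bsub>dihedral m\<^esub> z)"
    using assms
    by (simp add: dihedral_mult mod_neg_add_mod mod_neg_less mod_neg_mod_neg mod_simps ac_simps)
next
  fix x assume "x \<in> carrier (dihedral m)"
  then obtain a b where x: "x = (a, b)" "a < m"
    by (auto simp: carrier_dihedral)
  show "\<exists>y\<in>carrier (dihedral m). y \<otimes>\<^bsub>dihedral m\<^esub> x = \<one>\<^bsub>dihedral m\<^esub>"
  proof (cases b)
    case True
    then show ?thesis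
      using x by (intro bexI[of _ x]) (auto simp: dihedral_def mod_neg_def)
  next
    case False
    then show ?thesis
      using x assms by (intro bexI[of _ "(mod_neg m a, False)"])
        (auto simp: dihedral_mult mod_neg_less add_mod_neg_eq_0 add.commute dihedral_def)
  qed
qed (use assms in \<open>auto simp: dihedral_def\<close>)

lemma cyc_times_C2_inv:
  assumes "a < m"
  shows "inv\<^bsub>cyc_times_C2 m\<^esub> (a, b) = (mod_neg m a, b)"
proof -
  have "0 < m" using assms by simp
  then interpret comm_group "cyc_times_C2 m" by (rule comm_group_cyc_times_C2)
  show ?thesis
    using assms \<open>0 < m\<close> by (intro inv_equality)
      (auto simp: cyc_times_C2_mult one_cyc_times_C2 carrier_cyc_times_C2
        mod_neg_less add_mod_neg_eq_0 add.commute)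
qed

lemma dihedral_inv:
  assumes "a < m"
  shows "inv\<^bsub>dihedral m\<^esub> (a, b) = (if b then (a, b) else (mod_neg m a, b))"
proof -
  have "0 < m" using assms by simp
  then interpret group "dihedral m" by (rule group_dihedral)
  show ?thesis
    using assms \<open>0 < m\<close> by (intro inv_equality)
      (auto simp: dihedral_mult one_dihedral carrier_dihedral
        mod_neg_less add_mod_neg_eq_0 add.commute)
qed

lemma dihedral_inv_mult_eq_cyc_times_C2:
  assumes "a < m" and "c < m"
  shows "inv\<^bsub>dihedral m\<^esub> (a, b) \<otimes>\<^bsub>dihedral m\<^esub> (c, d)
    = inv\<^bsub>cyc_times_C2 m\<^esub> (if b \<noteq> d then mod_neg m a else a, b) \<otimes>\<^bsub>cyc_times_C2 m\<^esub> (c, d)"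
  using assms by (cases b; cases d)
    (simp_all add: dihedral_inv cyc_times_C2_inv dihedral_mult cyc_times_C2_mult
      mod_neg_less mod_neg_mod_neg)

lemma ga_mult_cyc_times_C2_eq_dihedral:
  assumes "inv_invariant (cyc_times_C2 m) Q"
  shows "ga_mult (cyc_times_C2 m) Q P = ga_mult (dihedral m) Q P"
proof
  fix g
  show "ga_mult (cyc_times_C2 m) Q P g = ga_mult (dihedral m) Q P g"
  proof (cases "g \<in> carrier (cyc_times_C2 m)")
    case False
    then show ?thesis by (simp add: ga_mult_def carrier_cyc_times_C2 carrier_dihedral)
  next
    case True
    then obtain c d where g: "g = (c, d)" "c < m"
      by (auto simp: carrier_cyc_times_C2)
    let ?C = "cyc_times_C2 m" and ?D = "dihedral m"
    define \<tau> where "\<tau> h = (if snd h \<noteq> d then mod_neg m (fst h) else fst h, snd h)" for h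
    have fin: "finite (carrier ?C)" by (simp add: carrier_cyc_times_C2)
    have \<tau>_bij: "bij_betw \<tau> (carrier ?C) (carrier ?C)"
      by (rule bij_betw_byWitness[where f' = \<tau>])
        (auto simp: \<tau>_def carrier_cyc_times_C2 mod_neg_mod_neg mod_neg_less)
    have Q_\<tau>: "Q (\<tau> h) = Q h" if "h \<in> carrier ?C" for h
      using assms that by (auto simp: \<tau>_def inv_invariant_def carrier_cyc_times_C2 cyc_times_C2_inv)
    have inv_mult_\<tau>: "inv\<^bsub>?D\<^esub> h \<otimes>\<^bsub>?D\<^esub> g = inv\<^bsub>?C\<^esub> (\<tau> h) \<otimes>\<^bsub>?C\<^esub> g"
      if "h \<in> carrier ?C" for h
      using that g by (auto simp: \<tau>_def carrier_cyc_times_C2 dihedral_inv_mult_eq_cyc_times_C2)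
    have "ga_mult ?D Q P g = (\<Sum>h\<in>carrier ?C. Q h * P (inv\<^bsub>?D\<^esub> h \<otimes>\<^bsub>?D\<^esub> g))"
      using fin True by (simp add: ga_mult_eq_sum_carrier carrier_cyc_times_C2 carrier_dihedral)
    also have "\<dots> = (\<Sum>h\<in>carrier ?C. Q (\<tau> h) * P (inv\<^bsub>?C\<^esub> (\<tau> h) \<otimes>\<^bsub>?C\<^esub> g))"
      by (intro sum.cong) (simp_all add: Q_\<tau> inv_mult_\<tau>)
    also have "\<dots> = (\<Sum>h\<in>carrier ?C. Q h * P (inv\<^bsub>?C\<^esub> h \<otimes>\<^bsub>?C\<^esub> g))"
      by (rule sum.reindex_bij_betw[OF \<tau>_bij])
    also have "\<dots> = ga_mult ?C Q P g"
      using fin True by (simp add: ga_mult_eq_sum_carrier)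
    finally show ?thesis ..
  qed
qed

lemma ga_pow_cyc_times_C2_eq_dihedral:
  assumes "0 < m" and "inv_invariant (cyc_times_C2 m) P"
  shows "ga_pow (cyc_times_C2 m) P n = ga_pow (dihedral m) P n"
proof (induction n)
  case 0
  show ?case by (simp add: ga_one_def one_cyc_times_C2 one_dihedral)
next
  case (Suc n)
  have "inv_invariant (cyc_times_C2 m) (ga_pow (cyc_times_C2 m) P n)"
    using assms by (intro comm_group.inv_invariant_ga_pow comm_group_cyc_times_C2)
      (simp_all add: carrier_cyc_times_C2)
  then show ?case
    using Suc.IH by (simp add: ga_mult_cyc_times_C2_eq_dihedral)
qed

theorem theorem7p2:
  fixes m :: nat and \<alpha> \<beta> :: "nat \<Rightarrow> real" and lam :: complex
  assumes "m \<ge> 1"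
    and "ga_reciprocal (cyc_times_C2 m) (P_elem m \<alpha> \<beta>)"
    and "cmod lam * (\<Sum>k<m. \<bar>\<alpha> k\<bar> + \<bar>\<beta> k\<bar>) < 1"
  shows "mahler_m (cyc_times_C2 m) (P_elem m \<alpha> \<beta>) lam = mahler_m (dihedral m) (P_elem m \<alpha> \<beta>) lam"
proof -
  have "inv_invariant (cyc_times_C2 m) (P_elem m \<alpha> \<beta>)"
    using assms(2) by (rule inv_invariant_if_reciprocal_real) (auto simp: P_elem_def split: prod.split)
  then have "ga_pow (cyc_times_C2 m) (P_elem m \<alpha> \<beta>) n = ga_pow (dihedral m) (P_elem m \<alpha> \<beta>) n" for n
    using assms(1) by (simp add: ga_pow_cyc_times_C2_eq_dihedral)
  then have "ga_trace_coeff (cyc_times_C2 m) (P_elem m \<alpha> \<beta>) = ga_trace_coeff (dihedral m) (P_elem m \<alpha> \<beta>)"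
    by (simp add: fun_eq_iff ga_trace_coeff_def one_cyc_times_C2 one_dihedral)
  then show ?thesis by (simp add: mahler_m_def)
qed

end
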